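(* Let $O$ be a total order of cardinality $\aleph$ (finite or infinite), and let $\alpha(\aleph)$ be the least ordinal of cardinality $\aleph$. Then $O$ has a strict binary questionable representation of length at most $\alpha(\aleph)+1$; more precisely, there is an order embedding of $O$ into $\mathrm{Next}(1,\alpha(\aleph)+1,(O^{0,1})_{\alpha(\aleph)+1})$ in which any two distinct images have a question.
   Context: Orders are partial orders (strict relation $<$); for elements $x,y$ we write $x\sim y$ when $x\neq y$ and neither $x<y$ nor $y<x$. $O^{0,1}$ denotes the two-element total order $0<1$. For an ordinal $j$, a sequence of orders $\mathcal O_j=(O_k)_{k<j}$ is indexed by the ordinals $k<j$; $(O')_j$ denotes the constant sequence with all items equal to $O'$. For an ordinal $\ell\le j$, a word of length $\ell$ over $\mathcal O_j$ is a sequence $X=(x_k)_{k<\ell}$ with $x_k\in\mathrm{Dom}(O_k)$. For two words $X,Y$, if there is a least ordinal $k<\min(\mathrm{len}X,\mathrm{len}Y)$ with $x_k\ne y_k$, then $(k,x_k,y_k)$ is the question of $X,Y$; otherwise $X,Y$ have no question. For ordinals $i<j$, $\mathrm{Next}(i,j,\mathcal O_j)$ is the partial order whose domain is the set of all words over $\mathcal O_j$ of length $\ell$ with $i\le\ell<j$, where $X<Y$ iff $X,Y$ have a question $(k,x_k,y_k)$ with $x_k<y_k$ in $O_k$; words with no question, or whose question has $x_k\sim y_k$ in $O_k$, are incomparable. A questionable representation of an order $O$ is an injective map $f$ from $\mathrm{Dom}(O)$ into $\mathrm{Dom}(\mathrm{Next}(i,j,\mathcal O_j))$ (for some $i<j$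 and $\mathcal O_j$) such that for all $x,y$: $f(x)<f(y)$ iff $x<y$ (so incomparability is also preserved). Its length is $j$, its width is the supremum of the cardinalities of the $\mathrm{Dom}(O_k)$, $k<j$. It is strict if any two distinct images have a question, total if every $O_k$ is a total order, and binary if it is total of width 2. *)

theory Defs
  imports Main
begin

definition strict_order_on :: "'a set \<Rightarrow> ('a \<Rightarrow> 'a \<Rightarrow> bool) \<Rightarrow> bool" where
  "strict_order_on D lt \<longleftrightarrow>
     (\<forall>x\<in>D. \<not> lt x x) \<and>
     (\<forall>x\<in>D. \<forall>y\<in>D. \<forall>z\<in>D. lt x y \<longrightarrow> lt y z \<longrightarrow> lt x z)"

definition total_strict_order_on :: "'a set \<Rightarrow> ('a \<Rightarrow> 'a \<Rightarrow> bool) \<Rightarrow> bool" where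
  "total_strict_order_on D lt \<longleftrightarrow> strict_order_on D lt \<and>
     (\<forall>x\<in>D. \<forall>y\<in>D. x \<noteq> y \<longrightarrow> lt x y \<or> lt y x)"

(* Positions (ordinals k < alpha) are the elements of Field r, for a well-order r
   of order type alpha.  An ordinal length l <= alpha is an initial segment of r. *)
definition init_seg :: "'i rel \<Rightarrow> 'i set \<Rightarrow> bool" where
  "init_seg r L \<longleftrightarrow> L \<subseteq> Field r \<and> (\<forall>x y. y \<in> L \<longrightarrow> (x, y) \<in> r \<longrightarrow> x \<in> L)"

(* A binary word: its set of positions L (= its length, an initial segment) and its
   letters (False = 0, True = 1 of O^{0,1}); letters outside L are normalised to False. *)
type_synonym 'i bword = "'i set \<times> ('i \<Rightarrow> bool)"

(* Words of length l with 1 <= l < alpha+1 over (O^{0,1})_{alpha+1}, where alpha is the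
   order type of r: i.e. Dom(Next(1, alpha+1, (O^{0,1})_{alpha+1})). *)
definition next_dom :: "'i rel \<Rightarrow> 'i bword set" where
  "next_dom r = {(L, w). init_seg r L \<and> L \<noteq> {} \<and> (\<forall>x. x \<notin> L \<longrightarrow> \<not> w x)}"

definition is_question :: "'i rel \<Rightarrow> 'i bword \<Rightarrow> 'i bword \<Rightarrow> 'i \<Rightarrow> bool" where
  "is_question r X Y k \<longleftrightarrow>
     k \<in> fst X \<and> k \<in> fst Y \<and> snd X k \<noteq> snd Y k \<and>
     (\<forall>k'. k' \<in> fst X \<longrightarrow> k' \<in> fst Y \<longrightarrow> (k', k) \<in> r \<longrightarrow> k' \<noteq> k \<longrightarrow> snd X k' = snd Y k')"

definition has_question :: "'i rel \<Rightarrow> 'i bword \<Rightarrow> 'i bword \<Rightarrow> bool" where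
  "has_question r X Y \<longleftrightarrow> (\<exists>k. is_question r X Y k)"

definition next_less :: "'i rel \<Rightarrow> 'i bword \<Rightarrow> 'i bword \<Rightarrow> bool" where
  "next_less r X Y \<longleftrightarrow> (\<exists>k. is_question r X Y k \<and> \<not> snd X k \<and> snd Y k)"

end

theory Submission
  imports Defs
begin

text \<open>Fix a well-ordering of \<open>D\<close> of order type \<open>\<alpha>(|D|)\<close> and use its elements as positions.
  The element \<open>x\<close> is sent to the full-length word whose letter at position \<open>d\<close> is \<open>1\<close> iff
  \<open>d < x\<close>, i.e. to the characteristic function of its strict down-set. For \<open>x < y\<close> the two
  words first differ at the least position in the interval \<open>[x, y)\<close>, where the word of \<open>x\<close>
  reads \<open>0\<close> and that of \<open>y\<close> reads \<open>1\<close>.\<close>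

lemma strict_order_onD:
  assumes "strict_order_on D lt"
  shows strict_order_on_irrefl: "x \<in> D \<Longrightarrow> \<not> lt x x"
    and strict_order_on_trans: "\<lbrakk>x \<in> D; y \<in> D; z \<in> D; lt x y; lt y z\<rbrakk> \<Longrightarrow> lt x z"
  using assms unfolding strict_order_on_def by blast+

lemma total_strict_order_onD:
  assumes "total_strict_order_on D lt"
  shows total_strict_order_on_strict: "strict_order_on D lt"
    and total_strict_order_on_total: "\<lbrakk>x \<in> D; y \<in> D; x \<noteq> y\<rbrakk> \<Longrightarrow> lt x y \<or> lt y x"
  using assms unfolding total_strict_order_on_def by blast+

lemma init_seg_Field: "init_seg r (Field r)"
  unfolding init_seg_def by (auto intro: FieldI1)

lemma is_question_sym: "is_question r X Y k \<Longrightarrow> is_question r Y X k"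
  unfolding is_question_def by auto

lemma not_has_question_refl: "\<not> has_question r X X"
  unfolding has_question_def is_question_def by blast

definition down_set_word :: "'a set \<Rightarrow> ('a \<Rightarrow> 'a \<Rightarrow> bool) \<Rightarrow> 'a \<Rightarrow> 'a bword" where
  "down_set_word D lt x = (D, \<lambda>d. d \<in> D \<and> lt d x)"

lemma down_set_word_in_next_dom:
  assumes "well_order_on D r" and "x \<in> D"
  shows "down_set_word D lt x \<in> next_dom r"
  using assms init_seg_Field[of r] well_order_on_Field[OF assms(1)]
  unfolding next_dom_def down_set_word_def by auto

lemma is_question_down_set_word:
  assumes wo: "well_order_on D r" and lt: "strict_order_on D lt"
    and xy: "x \<in> D" "y \<in> D" "lt x y"
  obtains k where "is_question r (down_set_word D lt x) (down_set_word D lt y) k"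
    and "k \<in> D" "\<not> lt k x" "lt k y"
proof -
  let ?I = "{d \<in> D. \<not> lt d x \<and> lt d y}"
  have wf: "wf (r - Id)" using wo by (simp add: well_order_on_def)
  have "x \<in> ?I" using xy strict_order_on_irrefl[OF lt] by blast
  then obtain k where k: "k \<in> ?I" and least: "\<And>d. (d, k) \<in> r - Id \<Longrightarrow> d \<notin> ?I"
    using wfE_min[OF wf, of x ?I] by blast
  have "lt d x \<longleftrightarrow> lt d y" if "d \<in> D" "(d, k) \<in> r" "d \<noteq> k" for d
    using least[of d] that xy strict_order_on_trans[OF lt, of d x y] by blast
  with k have "is_question r (down_set_word D lt x) (down_set_word D lt y) k"
    unfolding is_question_def down_set_word_def by auto
  with k that show ?thesis by blast
qed

lemma next_less_down_set_word_iff: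
  assumes wo: "well_order_on D r" and lt: "total_strict_order_on D lt"
    and xy: "x \<in> D" "y \<in> D"
  shows "next_less r (down_set_word D lt x) (down_set_word D lt y) \<longleftrightarrow> lt x y"
proof
  assume "next_less r (down_set_word D lt x) (down_set_word D lt y)"
  then obtain k where k: "k \<in> D" "\<not> lt k x" "lt k y"
    unfolding next_less_def is_question_def down_set_word_def by auto
  show "lt x y"
  proof (rule ccontr)
    assume "\<not> lt x y"
    with k xy have "lt y x" using total_strict_order_on_total[OF lt, of x y] by blast
    with k xy show False
      using strict_order_on_trans[OF total_strict_order_on_strict[OF lt], of k y x] by blast
  qed
next
  assume "lt x y"
  then obtain k where "is_question r (down_set_word D lt x) (down_set_word D lt y) k"
    and "k \<in> D" "\<not> lt k x" "lt k y"
    using is_question_down_set_word[OF wo total_strict_order_on_strict[OF lt] xy] by blast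
  then show "next_less r (down_set_word D lt x) (down_set_word D lt y)"
    unfolding next_less_def down_set_word_def by auto
qed

lemma has_question_down_set_word:
  assumes wo: "well_order_on D r" and lt: "total_strict_order_on D lt"
    and xy: "x \<in> D" "y \<in> D" "x \<noteq> y"
  shows "has_question r (down_set_word D lt x) (down_set_word D lt y)"
proof -
  note strict = total_strict_order_on_strict[OF lt]
  from total_strict_order_on_total[OF lt xy] show ?thesis
  proof
    assume "lt x y"
    then obtain k where "is_question r (down_set_word D lt x) (down_set_word D lt y) k"
      using is_question_down_set_word[OF wo strict xy(1,2)] by blast
    then show ?thesis unfolding has_question_def ..
  next
    assume "lt y x"
    then obtain k where "is_question r (down_set_word D lt y) (down_set_word D lt x) k"
      using is_question_down_set_word[OF wo strict xy(2,1)] by blast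
    then have "is_question r (down_set_word D lt x) (down_set_word D lt y) k"
      by (rule is_question_sym)
    then show ?thesis unfolding has_question_def ..
  qed
qed

theorem mainTheorem1:
  fixes D :: "'a set" and lt :: "'a \<Rightarrow> 'a \<Rightarrow> bool"
  assumes "total_strict_order_on D lt"
  shows "\<exists>f. (\<forall>x\<in>D. f x \<in> next_dom (card_of D)) \<and> inj_on f D \<and>
             (\<forall>x\<in>D. \<forall>y\<in>D. next_less (card_of D) (f x) (f y) \<longleftrightarrow> lt x y) \<and>
             (\<forall>x\<in>D. \<forall>y\<in>D. x \<noteq> y \<longrightarrow> has_question (card_of D) (f x) (f y))"
proof (intro exI conjI ballI impI)
  let ?f = "down_set_word D lt"
  have wo: "well_order_on D (card_of D)" by (rule card_of_well_order_on)
  show "?f x \<in> next_dom (card_of D)" if "x \<in> D" for x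
    using down_set_word_in_next_dom[OF wo that] .
  show question: "has_question (card_of D) (?f x) (?f y)" if "x \<in> D" "y \<in> D" "x \<noteq> y" for x y
    using has_question_down_set_word[OF wo assms that] .
  show "next_less (card_of D) (?f x) (?f y) \<longleftrightarrow> lt x y" if "x \<in> D" "y \<in> D" for x y
    using next_less_down_set_word_iff[OF wo assms that] .
  show "inj_on ?f D"
  proof (rule inj_onI, rule ccontr)
    fix x y assume "x \<in> D" "y \<in> D" "?f x = ?f y" "x \<noteq> y"
    then have "has_question (card_of D) (?f x) (?f x)"
      using question[of x y] by simp
    then show False by (simp add: not_has_question_refl)
  qed
qed

end
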